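(* Let $n\geq2$ and let $\gamma(t)=(x(t),r(t))$ be a solution of the system $$\dot x=\cos\theta,\qquad \dot r=\sin\theta,\qquad \dot\theta=\frac{x}{2}\sin\theta+\Big(\frac{n-1}{r}-\frac{r}{2}\Big)\cos\theta$$ in $\{r>0\}$. Then neither of the functions $x(t)$ and $r(t)-\sqrt{2(n-1)}$ has a positive local minimum or a negative local maximum; in particular, each of these functions has different signs at successive critical points.
   Context: Here $t$ is Euclidean arc length and $\theta$ is the angle between $\dot\gamma$ and the $x$-axis. *)

theory Defs
  imports "HOL-Analysis.Analysis"
begin

definition is_local_min_on :: "(real \<Rightarrow> real) \<Rightarrow> real set \<Rightarrow> real \<Rightarrow> bool" where
  "is_local_min_on f I t \<longleftrightarrow> t \<in> I \<and> (\<exists>e>0. \<forall>s\<in>I. \<bar>s - t\<bar> < e \<longrightarrow> f t \<le> f s)"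

definition is_local_max_on :: "(real \<Rightarrow> real) \<Rightarrow> real set \<Rightarrow> real \<Rightarrow> bool" where
  "is_local_max_on f I t \<longleftrightarrow> t \<in> I \<and> (\<exists>e>0. \<forall>s\<in>I. \<bar>s - t\<bar> < e \<longrightarrow> f s \<le> f t)"

definition is_critical_point :: "(real \<Rightarrow> real) \<Rightarrow> real \<Rightarrow> bool" where
  "is_critical_point f t \<longleftrightarrow> (f has_real_derivative 0) (at t)"

definition successive_critical_points ::
  "(real \<Rightarrow> real) \<Rightarrow> real set \<Rightarrow> real \<Rightarrow> real \<Rightarrow> bool" where
  "successive_critical_points f I t1 t2 \<longleftrightarrow>
     t1 \<in> I \<and> t2 \<in> I \<and> t1 < t2 \<and> is_critical_point f t1 \<and> is_critical_point f t2 \<and>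
     (\<forall>s. t1 < s \<and> s < t2 \<longrightarrow> \<not> is_critical_point f s)"

end

theory Submission imports Defs begin

text \<open>
  Both \<open>x\<close> and \<open>r - \<surd>(2(n-1))\<close> solve a linear second order equation
  \<open>f'' = a f' + b f\<close> whose coefficient \<open>b\<close> is negative wherever \<open>f' = 0\<close>: for \<open>x\<close> one has
  \<open>b = -sin\<^sup>2\<theta>/2\<close>, for \<open>r - R\<close> one has \<open>b = -cos\<^sup>2\<theta> (r + R)/(2r)\<close>.
  Hence at a critical point with \<open>f > 0\<close> we get \<open>f'' < 0\<close>, a strict local maximum, and dually for
  \<open>f < 0\<close>. Two successive critical points with \<open>f > 0\<close> would force \<open>f'\<close> to pass from negative
  to positive in between, giving another critical point; and \<open>f\<close> cannot vanish at a critical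
  point, since then Gronwall's inequality for \<open>f\<^sup>2 + f'\<^sup>2\<close> makes \<open>f' \<equiv> 0\<close>.
\<close>

lemma gronwall_eq_0:
  fixes E E' :: "real \<Rightarrow> real" and K a b t :: real
  assumes "a \<le> t" "t \<le> b"
    and deriv: "\<And>s. a \<le> s \<Longrightarrow> s \<le> b \<Longrightarrow> (E has_real_derivative E' s) (at s)"
    and nonneg: "\<And>s. a \<le> s \<Longrightarrow> s \<le> b \<Longrightarrow> E s \<ge> 0"
    and bound: "\<And>s. a \<le> s \<Longrightarrow> s \<le> b \<Longrightarrow> \<bar>E' s\<bar> \<le> K * E s"
    and zero: "E a = 0 \<or> E b = 0"
  shows "E t = 0"
proof (cases "E a = 0")
  case True
  define h where "h s = E s * exp (- K * s)" for s
  have "h t \<le> h a"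
  proof (rule DERIV_nonpos_imp_nonincreasing[OF \<open>a \<le> t\<close>])
    fix s assume s: "a \<le> s" "s \<le> t"
    have "(h has_real_derivative (E' s - K * E s) * exp (- K * s)) (at s)"
      unfolding h_def using s \<open>t \<le> b\<close>
      by (auto intro!: derivative_eq_intros deriv simp: algebra_simps)
    moreover have "(E' s - K * E s) * exp (- K * s) \<le> 0"
      using bound[of s] s \<open>t \<le> b\<close> by (intro mult_nonpos_nonneg) auto
    ultimately show "\<exists>y. (h has_real_derivative y) (at s) \<and> y \<le> 0" by blast
  qed
  with True have "E t * exp (- K * t) \<le> 0" by (simp add: h_def)
  with nonneg[of t] assms(1,2) show ?thesis by (simp add: mult_le_0_iff)
next
  case False
  with zero have "E b = 0" by simp
  define h where "h s = E s * exp (K * s)" for s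
  have "h t \<le> h b"
  proof (rule DERIV_nonneg_imp_nondecreasing[OF \<open>t \<le> b\<close>])
    fix s assume s: "t \<le> s" "s \<le> b"
    have "(h has_real_derivative (E' s + K * E s) * exp (K * s)) (at s)"
      unfolding h_def using s \<open>a \<le> t\<close>
      by (auto intro!: derivative_eq_intros deriv simp: algebra_simps)
    moreover have "(E' s + K * E s) * exp (K * s) \<ge> 0"
      using bound[of s] s \<open>a \<le> t\<close> by (intro mult_nonneg_nonneg) auto
    ultimately show "\<exists>y. (h has_real_derivative y) (at s) \<and> y \<ge> 0" by blast
  qed
  with \<open>E b = 0\<close> have "E t * exp (K * t) \<le> 0" by (simp add: h_def)
  with nonneg[of t] assms(1,2) show ?thesis by (simp add: mult_le_0_iff)
qed

locale restoring_ode =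
  fixes I :: "real set" and f g a b :: "real \<Rightarrow> real"
  assumes open_I: "open I" and interval_I: "is_interval I"
    and deriv_f: "\<And>t. t \<in> I \<Longrightarrow> (f has_real_derivative g t) (at t)"
    and deriv_g: "\<And>t. t \<in> I \<Longrightarrow> (g has_real_derivative a t * g t + b t * f t) (at t)"
    and cont_a: "continuous_on I a" and cont_b: "continuous_on I b"
    and restoring: "\<And>t. t \<in> I \<Longrightarrow> g t = 0 \<Longrightarrow> b t < 0"

lemma restoring_ode_uminus:
  assumes "restoring_ode I f g a b"
  shows "restoring_ode I (\<lambda>t. - f t) (\<lambda>t. - g t) a b"
proof -
  interpret restoring_ode I f g a b by (fact assms)
  show ?thesis
  proof
    fix t assume "t \<in> I"
    show "((\<lambda>t. - f t) has_real_derivative - g t) (at t)"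
      using deriv_f[OF \<open>t \<in> I\<close>] by (rule DERIV_minus)
    show "((\<lambda>t. - g t) has_real_derivative a t * - g t + b t * - f t) (at t)"
      using DERIV_minus[OF deriv_g[OF \<open>t \<in> I\<close>]] by simp
  qed (simp_all add: open_I interval_I cont_a cont_b restoring)
qed

context restoring_ode
begin

lemma critical_point_iff:
  assumes "t \<in> I"
  shows "is_critical_point f t \<longleftrightarrow> g t = 0"
  unfolding is_critical_point_def using DERIV_unique[OF deriv_f[OF assms], of 0] deriv_f[OF assms] by auto

lemma Icc_subset_I: "s \<in> I \<Longrightarrow> u \<in> I \<Longrightarrow> {s..u} \<subseteq> I"
  using interval_subset_is_interval[OF interval_I, of s u] by (simp add: cbox_interval)

lemma continuous_on_f: "S \<subseteq> I \<Longrightarrow> continuous_on S f"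
  by (rule continuous_at_imp_continuous_on) (use deriv_f DERIV_isCont in blast)

lemma continuous_on_g: "S \<subseteq> I \<Longrightarrow> continuous_on S g"
  by (rule continuous_at_imp_continuous_on) (use deriv_g DERIV_isCont in blast)

lemma deriv_sign_near_positive_critical:
  assumes "t \<in> I" "g t = 0" "f t > 0"
  obtains d where "d > 0" "\<And>h. 0 < h \<Longrightarrow> h < d \<Longrightarrow> g (t + h) < 0 \<and> g (t - h) > 0"
proof -
  have "a t * g t + b t * f t < 0"
    using restoring[OF assms(1,2)] assms(2,3) by (simp add: mult_neg_pos)
  then obtain d1 d2 where "d1 > 0" "\<forall>h>0. h < d1 \<longrightarrow> g t > g (t + h)"
    and "d2 > 0" "\<forall>h>0. h < d2 \<longrightarrow> g t < g (t - h)"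
    using DERIV_neg_dec_right DERIV_neg_dec_left deriv_g[OF \<open>t \<in> I\<close>] by metis
  then show ?thesis
    using that[of "min d1 d2"] \<open>g t = 0\<close> by auto
qed

lemma no_positive_local_min: "\<not> (is_local_min_on f I t \<and> f t > 0)"
proof
  assume "is_local_min_on f I t \<and> f t > 0"
  then obtain e where "t \<in> I" "f t > 0" "e > 0" and min: "\<forall>s\<in>I. \<bar>s - t\<bar> < e \<longrightarrow> f t \<le> f s"
    unfolding is_local_min_on_def by auto
  obtain e' where "e' > 0" "ball t e' \<subseteq> I" using open_I \<open>t \<in> I\<close> openE by blast
  define d where "d = min e e'"
  have near_I: "s \<in> I" if "\<bar>s - t\<bar> < d" for s
    using that \<open>ball t e' \<subseteq> I\<close> by (auto simp: d_def dist_real_def subset_iff abs_minus_commute)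
  have near_min: "\<forall>s. \<bar>t - s\<bar> < d \<longrightarrow> f t \<le> f s"
    using min near_I by (auto simp: d_def abs_minus_commute)
  have "g t = 0"
    using DERIV_local_min[OF deriv_f[OF \<open>t \<in> I\<close>] _ near_min] \<open>e > 0\<close> \<open>e' > 0\<close> by (simp add: d_def)
  then obtain d' where "d' > 0" and g_neg: "\<And>h. 0 < h \<Longrightarrow> h < d' \<Longrightarrow> g (t + h) < 0"
    using deriv_sign_near_positive_critical \<open>t \<in> I\<close> \<open>f t > 0\<close> by metis
  define h where "h = min d d' / 2"
  have "h > 0" "h < d" "h < d'" using \<open>d' > 0\<close> \<open>e > 0\<close> \<open>e' > 0\<close> by (auto simp: h_def d_def)
  have "{t..t + h} \<subseteq> I" using near_I \<open>h > 0\<close> \<open>h < d\<close> by auto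
  have "\<exists>y. (f has_real_derivative y) (at s) \<and> y < 0" if "t < s" "s < t + h" for s
  proof -
    have "s \<in> I" using that \<open>{t..t + h} \<subseteq> I\<close> by auto
    then show ?thesis using that deriv_f[of s] g_neg[of "s - t"] \<open>h < d'\<close> by auto
  qed
  then have "f (t + h) < f t"
    using DERIV_neg_imp_decreasing_open[of t "t + h" f] continuous_on_f[OF \<open>{t..t + h} \<subseteq> I\<close>] \<open>h > 0\<close>
    by auto
  moreover have "f t \<le> f (t + h)" using near_min \<open>h > 0\<close> \<open>h < d\<close> by simp
  ultimately show False by simp
qed

lemma no_negative_local_max: "\<not> (is_local_max_on f I t \<and> f t < 0)"
proof
  assume "is_local_max_on f I t \<and> f t < 0"
  then have "is_local_min_on (\<lambda>t. - f t) I t \<and> - f t > 0"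
    unfolding is_local_min_on_def is_local_max_on_def by auto
  with restoring_ode.no_positive_local_min[OF restoring_ode_uminus[OF restoring_ode_axioms]]
  show False by blast
qed

lemma not_both_positive_at_successive_zeros:
  assumes "t1 < t2" "t1 \<in> I" "t2 \<in> I" "g t1 = 0" "g t2 = 0"
    and between: "\<And>s. t1 < s \<Longrightarrow> s < t2 \<Longrightarrow> g s \<noteq> 0"
  shows "\<not> (f t1 > 0 \<and> f t2 > 0)"
proof
  assume "f t1 > 0 \<and> f t2 > 0"
  then obtain d1 d2 where "d1 > 0" and right: "\<And>h. 0 < h \<Longrightarrow> h < d1 \<Longrightarrow> g (t1 + h) < 0"
    and "d2 > 0" and left: "\<And>h. 0 < h \<Longrightarrow> h < d2 \<Longrightarrow> g (t2 - h) > 0"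
    using deriv_sign_near_positive_critical assms(2-5) by metis
  define m where "m = (t2 - t1) / 2"
  define h1 where "h1 = min d1 m / 2"
  define h2 where "h2 = min d2 m / 2"
  have "m > 0" using \<open>t1 < t2\<close> by (simp add: m_def)
  have h: "0 < h1" "h1 < d1" "0 < h2" "h2 < d2" "t1 + h1 < t2 - h2"
    using \<open>m > 0\<close> \<open>d1 > 0\<close> \<open>d2 > 0\<close> min.cobounded1[of d1 m] min.cobounded2[of d1 m]
      min.cobounded1[of d2 m] min.cobounded2[of d2 m]
    unfolding h1_def h2_def m_def by auto
  have "continuous_on {t1 + h1..t2 - h2} g"
    using Icc_subset_I[OF \<open>t1 \<in> I\<close> \<open>t2 \<in> I\<close>] h by (intro continuous_on_g) auto
  then obtain z where "z \<in> {t1 + h1..t2 - h2}" "g z = 0"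
    using IVT'[of g "t1 + h1" 0 "t2 - h2"] right[OF h(1,2)] left[OF h(3,4)] h(5) by force
  with between h show False by auto
qed

lemma zero_at_endpoint_imp_zero:
  assumes "t1 \<le> s" "s \<le> t2" "t1 \<in> I" "t2 \<in> I"
    and zero: "f t1 = 0 \<and> g t1 = 0 \<or> f t2 = 0 \<and> g t2 = 0"
  shows "g s = 0"
proof -
  have "{t1..t2} \<subseteq> I" using Icc_subset_I assms(3,4) .
  then obtain A B where A: "\<And>s. s \<in> {t1..t2} \<Longrightarrow> \<bar>a s\<bar> \<le> A"
    and B: "\<And>s. s \<in> {t1..t2} \<Longrightarrow> \<bar>b s\<bar> \<le> B"
    using continuous_on_compact_bound[OF compact_Icc] continuous_on_subset cont_a cont_b
    by (metis real_norm_def)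
  define E where "E u = (f u)\<^sup>2 + (g u)\<^sup>2" for u
  define E' where "E' u = (1 + b u) * (2 * f u * g u) + 2 * a u * (g u)\<^sup>2" for u
  have deriv_E: "(E has_real_derivative E' u) (at u)" if "t1 \<le> u" "u \<le> t2" for u
    using that \<open>{t1..t2} \<subseteq> I\<close> unfolding E_def E'_def
    by (auto intro!: derivative_eq_intros deriv_f deriv_g simp: algebra_simps power2_eq_square)
  have bound_E': "\<bar>E' u\<bar> \<le> (1 + B + 2 * A) * E u" if "t1 \<le> u" "u \<le> t2" for u
  proof -
    have "\<bar>2 * f u * g u\<bar> \<le> E u" "(g u)\<^sup>2 \<le> E u"
      using sum_squares_bound[of "f u" "g u"] sum_squares_bound[of "- f u" "g u"]
      by (auto simp: E_def abs_le_iff algebra_simps)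
    moreover have "\<bar>1 + b u\<bar> \<le> 1 + B" "\<bar>a u\<bar> \<le> A"
      using A[of u] B[of u] that by auto
    ultimately have "\<bar>1 + b u\<bar> * \<bar>2 * f u * g u\<bar> \<le> (1 + B) * E u"
      and "\<bar>2 * a u\<bar> * (g u)\<^sup>2 \<le> 2 * A * E u"
      by (auto intro!: mult_mono)
    moreover have "\<bar>E' u\<bar> \<le> \<bar>1 + b u\<bar> * \<bar>2 * f u * g u\<bar> + \<bar>2 * a u\<bar> * (g u)\<^sup>2"
      unfolding E'_def by (rule order_trans[OF abs_triangle_ineq]) (simp add: abs_mult)
    ultimately show ?thesis by (simp add: algebra_simps)
  qed
  have "E t1 = 0 \<or> E t2 = 0" using zero by (auto simp: E_def)
  then have "E s = 0"
    using gronwall_eq_0[OF assms(1,2) deriv_E _ bound_E'] by (simp add: E_def)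
  then show "g s = 0" by (simp add: E_def add_nonneg_eq_0_iff)
qed

lemma successive_critical_points_opposite_signs:
  assumes "successive_critical_points f I t1 t2"
  shows "f t1 * f t2 < 0"
proof -
  from assms have t: "t1 < t2" "t1 \<in> I" "t2 \<in> I"
    and "g t1 = 0" "g t2 = 0" and between: "\<And>s. t1 < s \<Longrightarrow> s < t2 \<Longrightarrow> g s \<noteq> 0"
    unfolding successive_critical_points_def
    using critical_point_iff Icc_subset_I[of t1 t2] by (auto simp: subset_iff)
  have "f t1 \<noteq> 0" "f t2 \<noteq> 0"
    using zero_at_endpoint_imp_zero[of t1 "(t1 + t2) / 2" t2] between[of "(t1 + t2) / 2"]
      t \<open>g t1 = 0\<close> \<open>g t2 = 0\<close> by auto
  moreover have "\<not> (f t1 > 0 \<and> f t2 > 0)"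
    using not_both_positive_at_successive_zeros t \<open>g t1 = 0\<close> \<open>g t2 = 0\<close> between by blast
  moreover have "\<not> (f t1 < 0 \<and> f t2 < 0)"
    using restoring_ode.not_both_positive_at_successive_zeros
      [OF restoring_ode_uminus[OF restoring_ode_axioms] t] \<open>g t1 = 0\<close> \<open>g t2 = 0\<close> between
    by auto
  ultimately show ?thesis by (auto simp: mult_less_0_iff)
qed

lemma critical_value_signs:
  "(\<forall>t. \<not> (is_local_min_on f I t \<and> f t > 0))
   \<and> (\<forall>t. \<not> (is_local_max_on f I t \<and> f t < 0))
   \<and> (\<forall>t1 t2. successive_critical_points f I t1 t2 \<longrightarrow> f t1 * f t2 < 0)"
  using no_positive_local_min no_negative_local_max successive_critical_points_opposite_signs
  by blast

end

text \<open>The system of the statement with \<open>c = n - 1\<close>; \<open>r \<equiv> \<surd>(2c)\<close> is the cylinder solution.\<close>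

locale shrinker_profile =
  fixes c :: real and I :: "real set" and x r \<theta> :: "real \<Rightarrow> real"
  assumes c_nonneg: "c \<ge> 0" and open_I: "open I" and interval_I: "is_interval I"
    and r_pos: "\<And>t. t \<in> I \<Longrightarrow> r t > 0"
    and deriv_x: "\<And>t. t \<in> I \<Longrightarrow> (x has_real_derivative cos (\<theta> t)) (at t)"
    and deriv_r: "\<And>t. t \<in> I \<Longrightarrow> (r has_real_derivative sin (\<theta> t)) (at t)"
    and deriv_\<theta>: "\<And>t. t \<in> I \<Longrightarrow>
      (\<theta> has_real_derivative x t / 2 * sin (\<theta> t) + (c / r t - r t / 2) * cos (\<theta> t)) (at t)"
begin

lemma continuous_on_x_r_\<theta>: "continuous_on I x" "continuous_on I r" "continuous_on I \<theta>"
  by (rule continuous_at_imp_continuous_on; use deriv_x deriv_r deriv_\<theta> DERIV_isCont in blast)+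

lemma restoring_ode_x:
  "restoring_ode I x (\<lambda>t. cos (\<theta> t))
     (\<lambda>t. - (c / r t - r t / 2) * sin (\<theta> t)) (\<lambda>t. - (sin (\<theta> t))\<^sup>2 / 2)"
proof
  fix t assume "t \<in> I"
  show "(x has_real_derivative cos (\<theta> t)) (at t)" using deriv_x[OF \<open>t \<in> I\<close>] .
  from deriv_\<theta>[OF \<open>t \<in> I\<close>]
  show "((\<lambda>t. cos (\<theta> t)) has_real_derivative
      - (c / r t - r t / 2) * sin (\<theta> t) * cos (\<theta> t) + - (sin (\<theta> t))\<^sup>2 / 2 * x t) (at t)"
    by (rule DERIV_fun_cos[THEN DERIV_cong]) (simp add: algebra_simps power2_eq_square)
next
  fix t assume "cos (\<theta> t) = 0"
  then show "- (sin (\<theta> t))\<^sup>2 / 2 < 0" using sin_cos_squared_add[of "\<theta> t"] by simp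
next
  show "continuous_on I (\<lambda>t. - (c / r t - r t / 2) * sin (\<theta> t))"
    using continuous_on_x_r_\<theta> r_pos by (auto intro!: continuous_intros simp: less_imp_neq[symmetric])
  show "continuous_on I (\<lambda>t. - (sin (\<theta> t))\<^sup>2 / 2)"
    using continuous_on_x_r_\<theta> by (auto intro!: continuous_intros)
qed (use open_I interval_I in auto)

lemma restoring_ode_r:
  defines "R \<equiv> sqrt (2 * c)"
  shows "restoring_ode I (\<lambda>t. r t - R) (\<lambda>t. sin (\<theta> t))
     (\<lambda>t. x t * cos (\<theta> t) / 2) (\<lambda>t. - (cos (\<theta> t))\<^sup>2 * ((r t + R) / (2 * r t)))"
proof
  have "R \<ge> 0" "R\<^sup>2 = 2 * c" using c_nonneg by (auto simp: R_def)
  fix t assume "t \<in> I"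
  show "((\<lambda>t. r t - R) has_real_derivative sin (\<theta> t)) (at t)"
    using deriv_r[OF \<open>t \<in> I\<close>] by (auto intro!: derivative_eq_intros)
  have factor: "c / r t - r t / 2 = - ((r t + R) / (2 * r t)) * (r t - R)"
    using r_pos[OF \<open>t \<in> I\<close>] \<open>R\<^sup>2 = 2 * c\<close> by (simp add: field_simps power2_eq_square)
  have ring: "co * (X / 2 * si + - q * D * co) = X * co / 2 * si + - co\<^sup>2 * q * D"
    for co si X q D :: real
    by (simp add: algebra_simps power2_eq_square)
  from deriv_\<theta>[OF \<open>t \<in> I\<close>]
  show "((\<lambda>t. sin (\<theta> t)) has_real_derivative
      x t * cos (\<theta> t) / 2 * sin (\<theta> t)
      + - (cos (\<theta> t))\<^sup>2 * ((r t + R) / (2 * r t)) * (r t - R)) (at t)"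
    by (rule DERIV_fun_sin[THEN DERIV_cong]) (simp only: factor ring)
  assume "sin (\<theta> t) = 0"
  then show "- (cos (\<theta> t))\<^sup>2 * ((r t + R) / (2 * r t)) < 0"
    using sin_cos_squared_add[of "\<theta> t"] r_pos[OF \<open>t \<in> I\<close>] \<open>R \<ge> 0\<close> by (simp add: divide_neg_pos)
next
  show "continuous_on I (\<lambda>t. x t * cos (\<theta> t) / 2)"
    using continuous_on_x_r_\<theta> by (auto intro!: continuous_intros)
  show "continuous_on I (\<lambda>t. - (cos (\<theta> t))\<^sup>2 * ((r t + R) / (2 * r t)))"
    using continuous_on_x_r_\<theta> r_pos by (auto intro!: continuous_intros simp: less_imp_neq[symmetric])
qed (use open_I interval_I in auto)

end

theorem lemma8:
  fixes n :: nat and I :: "real set" and x r \<theta> :: "real \<Rightarrow> real"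
  assumes n: "n \<ge> 2"
    and I: "open I" "is_interval I" "I \<noteq> {}"
    and rpos: "\<And>t. t \<in> I \<Longrightarrow> r t > 0"
    and dx: "\<And>t. t \<in> I \<Longrightarrow> (x has_real_derivative cos (\<theta> t)) (at t)"
    and dr: "\<And>t. t \<in> I \<Longrightarrow> (r has_real_derivative sin (\<theta> t)) (at t)"
    and d\<theta>: "\<And>t. t \<in> I \<Longrightarrow> (\<theta> has_real_derivative
               (x t / 2 * sin (\<theta> t) + ((real n - 1) / r t - r t / 2) * cos (\<theta> t))) (at t)"
  shows "\<forall>f \<in> {x, \<lambda>t. r t - sqrt (2 * (real n - 1))}.
           (\<forall>t. \<not> (is_local_min_on f I t \<and> f t > 0))
         \<and> (\<forall>t. \<not> (is_local_max_on f I t \<and> f t < 0))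
         \<and> (\<forall>t1 t2. successive_critical_points f I t1 t2 \<longrightarrow> f t1 * f t2 < 0)"
proof -
  interpret shrinker_profile "real n - 1" I x r \<theta>
    using n I rpos dx dr d\<theta> by unfold_locales auto
  show ?thesis
    using restoring_ode.critical_value_signs[OF restoring_ode_x]
      restoring_ode.critical_value_signs[OF restoring_ode_r] by simp
qed

end
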